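(* For every integer $n\ge0$ and every real $s>-1$, \[ \int_0^1 p_n(x)x^s\,dx=(-1)^n\frac{(\tfrac12-\tfrac s2)_n}{(s+1)_{n+1}},\qquad \int_0^1 q_n(x)x^s\,dx=(-1)^n\frac{(-\tfrac s2)_n}{(s+1)_{n+1}}. \]
   Context: Pochhammer symbol: $(a)_0=1$, $(a)_n=a(a+1)\cdots(a+n-1)$. For real $a$ and integer $n\ge0$, $\binom{n+a}{n}:=\frac{(a+1)_n}{n!}$. Define \[ p_n(x)=\sum_{k=0}^n\binom nk\binom{n+\frac k2}{n}(-1)^{n-k}x^k,\qquad q_n(x)=\sum_{k=0}^n\binom nk\binom{n+\frac{k-1}2}{n}(-1)^{n-k}x^k. \] *)

theory Defs
  imports "HOL-Analysis.Analysis"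
begin

(* generalized binomial  binom(n+a, n) := (a+1)_n / n!  for real a *)
definition gbinom :: "nat \<Rightarrow> real \<Rightarrow> real" where
  "gbinom n a = pochhammer (a + 1) n / fact n"

definition p_poly :: "nat \<Rightarrow> real \<Rightarrow> real" where
  "p_poly n x = (\<Sum>k=0..n. real (n choose k) * gbinom n (real k / 2) * (-1) ^ (n - k) * x ^ k)"

definition q_poly :: "nat \<Rightarrow> real \<Rightarrow> real" where
  "q_poly n x = (\<Sum>k=0..n. real (n choose k) * gbinom n ((real k - 1) / 2) * (-1) ^ (n - k) * x ^ k)"

end

theory Submission
  imports Defs
begin

text \<open>
  Integrating term by term, both integrals become
  \<open>(-1)^n/n! \<cdot> \<Sum>\<^sub>k (n choose k) (-1)^k P(k)/(k+s+1)\<close> with \<open>P(k) = (c k + a)\<^sub>n\<close>,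
  i.e.\ an \<open>n\<close>-th finite difference of the rational function \<open>P(k)/(k+t)\<close>, \<open>t = s+1\<close>.
  Writing \<open>P(k) = (P(k) - P(-t)) + P(-t)\<close>, the first part divided by \<open>k+t\<close> is a polynomial
  of degree \<open>< n\<close> and is annihilated, while the \<open>n\<close>-th difference of \<open>1/(k+t)\<close> is
  \<open>n!/(t)\<^sub>n\<^sub>+\<^sub>1\<close>. Hence the sum equals \<open>P(-t) n!/(t)\<^sub>n\<^sub>+\<^sub>1\<close>, and \<open>P(-t) = (a - c t)\<^sub>n\<close>.
\<close>

text \<open>\<open>alt_diff n f = (-1)^n (\<Delta>\<^sup>n f)(0)\<close> for the forward difference \<open>\<Delta>\<close>.\<close>

definition alt_diff :: "nat \<Rightarrow> (nat \<Rightarrow> 'a::comm_ring_1) \<Rightarrow> 'a" where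
  "alt_diff n f = (\<Sum>k\<le>n. of_nat (n choose k) * (-1) ^ k * f k)"

lemma alt_diff_add: "alt_diff n (\<lambda>k. f k + g k) = alt_diff n f + alt_diff n g"
  by (simp add: alt_diff_def algebra_simps sum.distrib)

lemma alt_diff_cmult: "alt_diff n (\<lambda>k. c * f k) = c * alt_diff n f"
  by (simp add: alt_diff_def algebra_simps sum_distrib_left)

lemma alt_diff_Suc: "alt_diff (Suc n) f = alt_diff n f - alt_diff n (\<lambda>k. f (Suc k))"
proof -
  have "alt_diff (Suc n) f
      = f 0 + (\<Sum>i\<le>n. of_nat (Suc n choose Suc i) * (-1) ^ Suc i * f (Suc i))"
    unfolding alt_diff_def by (subst sum.atMost_Suc_shift) simp
  also have "\<dots> = f 0 + (\<Sum>i\<le>n. of_nat (n choose Suc i) * (-1) ^ Suc i * f (Suc i))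
                  - alt_diff n (\<lambda>k. f (Suc k))"
    by (simp add: alt_diff_def algebra_simps sum.distrib sum_subtractf sum_negf)
  also have "f 0 + (\<Sum>i\<le>n. of_nat (n choose Suc i) * (-1) ^ Suc i * f (Suc i)) = alt_diff n f"
  proof -
    have "alt_diff n f = (\<Sum>k\<le>Suc n. of_nat (n choose k) * (-1) ^ k * f k)"
      by (simp add: alt_diff_def binomial_eq_0)
    then show ?thesis by (subst (asm) sum.atMost_Suc_shift) simp
  qed
  finally show ?thesis .
qed

lemma alt_diff_of_nat_mult:
  "alt_diff (Suc n) (\<lambda>k. of_nat k * g k) = - of_nat (Suc n) * alt_diff n (\<lambda>k. g (Suc k))"
proof -
  have "alt_diff (Suc n) (\<lambda>k. of_nat k * g k)
      = (\<Sum>i\<le>n. (of_nat (Suc n choose Suc i) * of_nat (Suc i)) * ((-1) ^ Suc i * g (Suc i)))"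
    unfolding alt_diff_def by (subst sum.atMost_Suc_shift) (simp add: mult_ac)
  also have "\<dots> = (\<Sum>i\<le>n. (of_nat (Suc n) * of_nat (n choose i)) * ((-1) ^ Suc i * g (Suc i)))"
    by (simp only: of_nat_mult [symmetric] Suc_times_binomial_eq)
  also have "\<dots> = (\<Sum>i\<le>n. - of_nat (Suc n) * (of_nat (n choose i) * (-1) ^ i * g (Suc i)))"
    by (simp add: algebra_simps)
  finally show ?thesis
    by (simp add: alt_diff_def sum_distrib_left)
qed

lemma alt_diff_linear_prod_eq_0:
  fixes b :: "nat \<Rightarrow> 'a::comm_ring_1"
  assumes "m < n"
  shows "alt_diff n (\<lambda>k. \<Prod>j<m. c * of_nat k + b j) = 0"
  using assms
proof (induction m arbitrary: n b)
  case 0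
  then show ?case
    using choose_alternating_sum[of n, where 'a='a] by (simp add: alt_diff_def mult.commute)
next
  case (Suc m)
  then obtain n' where n: "n = Suc n'" and "m < n'"
    by (cases n) auto
  have "(\<lambda>k. \<Prod>j<m. c * of_nat (Suc k) + b j) = (\<lambda>k. \<Prod>j<m. c * of_nat k + (b j + c))"
    by (simp add: algebra_simps)
  then have shifted: "alt_diff n' (\<lambda>k. \<Prod>j<m. c * of_nat (Suc k) + b j) = 0"
    using Suc.IH[of n' "\<lambda>j. b j + c"] \<open>m < n'\<close> by simp
  have expand: "(\<lambda>k. \<Prod>j<Suc m. c * of_nat k + b j)
      = (\<lambda>k. of_nat k * (c * (\<Prod>j<m. c * of_nat k + b j)) + b m * (\<Prod>j<m. c * of_nat k + b j))"
    by (simp add: algebra_simps)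
  show ?case
    unfolding expand n alt_diff_add alt_diff_of_nat_mult alt_diff_cmult shifted
    using Suc.IH[of n b] Suc.prems n by simp
qed

lemma alt_diff_inverse:
  fixes t :: real
  assumes "t > 0"
  shows "alt_diff n (\<lambda>k. 1 / (real k + t)) = fact n / pochhammer t (Suc n)"
  using assms
proof (induction n arbitrary: t)
  case 0
  then show ?case by (simp add: alt_diff_def)
next
  case (Suc n)
  have "t + real (Suc n) \<noteq> 0"
    using Suc.prems by simp
  then have "fact n / pochhammer t (Suc n) = fact n * (t + real (Suc n)) / pochhammer t (Suc (Suc n))"
    unfolding pochhammer_Suc [of t "Suc n"] by simp
  moreover have "fact n / pochhammer (t + 1) (Suc n) = fact n * t / pochhammer t (Suc (Suc n))"
    using Suc.prems unfolding pochhammer_rec [of t "Suc n"] by simp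
  ultimately have "alt_diff (Suc n) (\<lambda>k. 1 / (real k + t))
      = fact n * (t + real (Suc n)) / pochhammer t (Suc (Suc n))
          - fact n * t / pochhammer t (Suc (Suc n))"
    using Suc.IH[of t] Suc.IH[of "t + 1"] Suc.prems by (simp add: alt_diff_Suc algebra_simps)
  also have "\<dots> = fact (Suc n) / pochhammer t (Suc (Suc n))"
    by (simp add: diff_divide_distrib [symmetric] algebra_simps)
  finally show ?case .
qed

lemma alt_diff_linear_prod_divide:
  fixes t c :: real
  assumes "m \<le> n" and "t > 0"
  shows "alt_diff n (\<lambda>k. (\<Prod>j<m. c * real k + b j) / (real k + t))
           = fact n * (\<Prod>j<m. b j - c * t) / pochhammer t (Suc n)"
  using assms
proof (induction m)
  case 0
  then show ?case using alt_diff_inverse[of t n] by simp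
next
  case (Suc m)
  let ?P = "\<lambda>k. \<Prod>j<m. c * real k + b j"
  \<comment> \<open>\<open>c k + b = c (k + t) + (b - c t)\<close>\<close>
  have partial_fraction: "(\<lambda>k. (\<Prod>j<Suc m. c * real k + b j) / (real k + t))
             = (\<lambda>k. c * ?P k + (b m - c * t) * (?P k / (real k + t)))"
  proof
    fix k
    have "real k + t > 0" using Suc.prems by (simp add: add_nonneg_pos)
    then show "(\<Prod>j<Suc m. c * real k + b j) / (real k + t)
             = c * ?P k + (b m - c * t) * (?P k / (real k + t))"
      by (simp add: field_simps less_imp_neq [THEN not_sym])
  qed
  have "alt_diff n ?P = 0"
    using Suc.prems by (intro alt_diff_linear_prod_eq_0) simp
  with Suc show ?case
    unfolding partial_fraction alt_diff_add alt_diff_cmult by simp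
qed

lemma has_integral_power_mult_powr:
  fixes s :: real
  assumes "s > -1"
  shows "((\<lambda>x. x ^ k * x powr s) has_integral 1 / (real k + s + 1)) {0..1}"
proof -
  have "((\<lambda>x. x powr (real k + s)) has_integral 1 powr (real k + s + 1) / (real k + s + 1)) {0..1}"
    using assms by (intro has_integral_powr_from_0) auto
  then have "((\<lambda>x. x powr (real k + s)) has_integral 1 / (real k + s + 1)) {0..1}"
    by simp
  then show ?thesis
  proof (rule has_integral_eq [rotated])
    fix x :: real
    assume "x \<in> {0..1}"
    then show "x powr (real k + s) = x ^ k * x powr s"
      by (cases "x = 0") (auto simp: powr_add powr_realpow)
  qed
qed

theorem integral_pochhammer_binomial_poly:
  fixes s c a :: real
  assumes "s > -1"
  shows "integral {0..1}
           (\<lambda>x. (\<Sum>k=0..n. real (n choose k) * (pochhammer (c * real k + a) n / fact n)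
                              * (-1) ^ (n - k) * x ^ k) * x powr s)
         = (-1) ^ n * pochhammer (a - c * (s + 1)) n / pochhammer (s + 1) (n + 1)"
proof -
  define coeff where
    "coeff k = real (n choose k) * (pochhammer (c * real k + a) n / fact n) * (-1) ^ (n - k)" for k
  have "((\<lambda>x. \<Sum>k=0..n. coeff k * (x ^ k * x powr s))
          has_integral (\<Sum>k=0..n. coeff k * (1 / (real k + s + 1)))) {0..1}"
    using assms by (intro has_integral_sum has_integral_mult_right has_integral_power_mult_powr) auto
  then have integral:
    "integral {0..1} (\<lambda>x. (\<Sum>k=0..n. coeff k * x ^ k) * x powr s)
       = (\<Sum>k=0..n. coeff k * (1 / (real k + s + 1)))"
    by (simp add: integral_unique sum_distrib_right mult.assoc)
  have "(\<Sum>k=0..n. coeff k * (1 / (real k + s + 1)))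
      = (-1) ^ n / fact n
          * alt_diff n (\<lambda>k. (\<Prod>j<n. c * real k + (a + real j)) / (real k + (s + 1)))"
    unfolding alt_diff_def atLeast0AtMost sum_distrib_left
  proof (rule sum.cong [OF refl])
    fix k assume "k \<in> {..n}"
    then have "(-1::real) ^ (n - k) = (-1) ^ n * (-1) ^ k"
      by (simp add: neg_one_power_add_eq_neg_one_power_diff [symmetric] power_add)
    then show "coeff k * (1 / (real k + s + 1))
             = (-1) ^ n / fact n * (real (n choose k) * (-1) ^ k
                 * ((\<Prod>j<n. c * real k + (a + real j)) / (real k + (s + 1))))"
      by (simp add: coeff_def pochhammer_prod lessThan_atLeast0 add.assoc field_simps)
  qed
  also have "\<dots> = (-1) ^ n / fact n
                      * (fact n * (\<Prod>j<n. a + real j - c * (s + 1)) / pochhammer (s + 1) (Suc n))"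
    using assms by (subst alt_diff_linear_prod_divide) auto
  also have "(\<Prod>j<n. a + real j - c * (s + 1)) = pochhammer (a - c * (s + 1)) n"
    by (simp add: pochhammer_prod lessThan_atLeast0 algebra_simps)
  finally show ?thesis
    using integral by (simp add: coeff_def)
qed

theorem mainTheorem3:
  fixes n :: nat and s :: real
  assumes "s > -1"
  shows "(integral {0..1} (\<lambda>x. p_poly n x * x powr s)
           = (-1) ^ n * pochhammer (1/2 - s/2) n / pochhammer (s + 1) (n + 1)) \<and>
         (integral {0..1} (\<lambda>x. q_poly n x * x powr s)
           = (-1) ^ n * pochhammer (- s/2) n / pochhammer (s + 1) (n + 1))"
proof
  have "p_poly n x = (\<Sum>k=0..n. real (n choose k) * (pochhammer (1/2 * real k + 1) n / fact n)
                                 * (-1) ^ (n - k) * x ^ k)" for x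
    by (simp add: p_poly_def gbinom_def)
  moreover have "1 - 1/2 * (s + 1) = 1/2 - s/2"
    by (simp add: field_simps)
  ultimately show "integral {0..1} (\<lambda>x. p_poly n x * x powr s)
                     = (-1) ^ n * pochhammer (1/2 - s/2) n / pochhammer (s + 1) (n + 1)"
    using integral_pochhammer_binomial_poly[OF assms, of n "1/2" 1] by simp
next
  have "q_poly n x = (\<Sum>k=0..n. real (n choose k) * (pochhammer (1/2 * real k + 1/2) n / fact n)
                                 * (-1) ^ (n - k) * x ^ k)" for x
    by (simp add: q_poly_def gbinom_def field_simps)
  moreover have "1/2 - 1/2 * (s + 1) = - s/2"
    by (simp add: field_simps)
  ultimately show "integral {0..1} (\<lambda>x. q_poly n x * x powr s)
                     = (-1) ^ n * pochhammer (- s/2) n / pochhammer (s + 1) (n + 1)"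
    using integral_pochhammer_binomial_poly[OF assms, of n "1/2" "1/2"] by simp
qed

end
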